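(* Let $(W,S)$ be a Coxeter system with standard geometric representation on $V$. Let $C_1$ and $C_2$ be two cones in $V$. If $C_1\cap C_2=\{0\}$, then there exists a reflection ordering such that every root contained in $C_1$ is smaller than every root contained in $C_2$.
   Context: A cone in $V$ is a subset closed under nonnegative linear combinations of its elements. $V$ has basis the simple roots; $\Phi^+$ is the set of positive roots. A reflection ordering is a total ordering $\preceq$ on $\Phi^+$ such that for all $\alpha,\beta\in\Phi^+$ and $a,b>0$ with $a\alpha+b\beta\in\Phi^+$, either $\alpha\preceq a\alpha+b\beta\preceq\beta$ or $\beta\preceq a\alpha+b\beta\preceq\alpha$. *)

theory Defs
  imports Complex_Main "HOL-Library.Extended_Nat"
begin

text \<open>A Coxeter system (W,S) is determined (up to isomorphism) by its Coxeter matrix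
  m : S x S -> {1,2,...,\<infinity>}; the standard geometric representation depends only on m.\<close>

definition coxeter_matrix :: "'a set \<Rightarrow> ('a \<Rightarrow> 'a \<Rightarrow> enat) \<Rightarrow> bool" where
  "coxeter_matrix S m \<longleftrightarrow>
     (\<forall>s\<in>S. m s s = 1) \<and>
     (\<forall>s\<in>S. \<forall>t\<in>S. m s t = m t s) \<and>
     (\<forall>s\<in>S. \<forall>t\<in>S. s \<noteq> t \<longrightarrow> m s t \<ge> 2)"

text \<open>The space V: real vectors with basis indexed by S, i.e. finitely supported
  functions S -> real (the simple root alpha_s is the indicator of s).\<close>

definition vspace :: "'a set \<Rightarrow> ('a \<Rightarrow> real) set" where
  "vspace S = {v. (\<forall>x. x \<notin> S \<longrightarrow> v x = 0) \<and> finite {x. v x \<noteq> 0}}"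

definition simple_root :: "'a \<Rightarrow> ('a \<Rightarrow> real)" where
  "simple_root s = (\<lambda>x. if x = s then 1 else 0)"

definition bcoef :: "('a \<Rightarrow> 'a \<Rightarrow> enat) \<Rightarrow> 'a \<Rightarrow> 'a \<Rightarrow> real" where
  "bcoef m s t = (case m s t of enat k \<Rightarrow> - cos (pi / real k) | \<infinity> \<Rightarrow> -1)"

definition bform :: "('a \<Rightarrow> 'a \<Rightarrow> enat) \<Rightarrow> ('a \<Rightarrow> real) \<Rightarrow> ('a \<Rightarrow> real) \<Rightarrow> real" where
  "bform m u v = (\<Sum>s\<in>{x. u x \<noteq> 0}. \<Sum>t\<in>{y. v y \<noteq> 0}. u s * v t * bcoef m s t)"

definition sreflect :: "('a \<Rightarrow> 'a \<Rightarrow> enat) \<Rightarrow> 'a \<Rightarrow> ('a \<Rightarrow> real) \<Rightarrow> ('a \<Rightarrow> real)" where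
  "sreflect m s v = (\<lambda>x. v x - 2 * bform m (simple_root s) v * simple_root s x)"

text \<open>The root system Phi = W \<cdot> {alpha_s : s \<in> S}, W generated by the simple reflections.\<close>

inductive_set roots :: "'a set \<Rightarrow> ('a \<Rightarrow> 'a \<Rightarrow> enat) \<Rightarrow> ('a \<Rightarrow> real) set"
  for S m where
  simple: "s \<in> S \<Longrightarrow> simple_root s \<in> roots S m"
| refl_step: "s \<in> S \<Longrightarrow> v \<in> roots S m \<Longrightarrow> sreflect m s v \<in> roots S m"

definition pos_roots :: "'a set \<Rightarrow> ('a \<Rightarrow> 'a \<Rightarrow> enat) \<Rightarrow> ('a \<Rightarrow> real) set" where
  "pos_roots S m = {v \<in> roots S m. \<forall>x. v x \<ge> 0}"

definition lincomb2 :: "real \<Rightarrow> ('a \<Rightarrow> real) \<Rightarrow> real \<Rightarrow> ('a \<Rightarrow> real) \<Rightarrow> ('a \<Rightarrow> real)" where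
  "lincomb2 a x b y = (\<lambda>i. a * x i + b * y i)"

definition reflection_ordering ::
  "'a set \<Rightarrow> ('a \<Rightarrow> 'a \<Rightarrow> enat) \<Rightarrow> (('a \<Rightarrow> real) \<times> ('a \<Rightarrow> real)) set \<Rightarrow> bool" where
  "reflection_ordering S m r \<longleftrightarrow>
     linear_order_on (pos_roots S m) r \<and> r \<subseteq> pos_roots S m \<times> pos_roots S m \<and>
     (\<forall>\<alpha>\<in>pos_roots S m. \<forall>\<beta>\<in>pos_roots S m. \<forall>a b :: real. a > 0 \<longrightarrow> b > 0 \<longrightarrow>
        lincomb2 a \<alpha> b \<beta> \<in> pos_roots S m \<longrightarrow>
        ((\<alpha>, lincomb2 a \<alpha> b \<beta>) \<in> r \<and> (lincomb2 a \<alpha> b \<beta>, \<beta>) \<in> r) \<or>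
        ((\<beta>, lincomb2 a \<alpha> b \<beta>) \<in> r \<and> (lincomb2 a \<alpha> b \<beta>, \<alpha>) \<in> r))"

definition cone_in :: "'a set \<Rightarrow> ('a \<Rightarrow> real) set \<Rightarrow> bool" where
  "cone_in S C \<longleftrightarrow> C \<subseteq> vspace S \<and> (\<lambda>_. 0) \<in> C \<and>
     (\<forall>x\<in>C. \<forall>y\<in>C. \<forall>a b :: real. a \<ge> 0 \<longrightarrow> b \<ge> 0 \<longrightarrow> lincomb2 a x b y \<in> C)"

end

theory Submission imports Defs begin

text \<open>The coordinate sum is positive on positive roots, and since B(\<alpha>,\<alpha>) = 1 for every root,
  no two distinct positive roots are positively proportional. So a positive root \<alpha> is
  determined by its normalization \<alpha>/\<Sigma>\<alpha> on the affine slice where the coordinate sum is 1.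
  The differences c2 - c1 of nonnegative points c1 \<in> C1, c2 \<in> C2 of equal coordinate sum
  form a pointed cone K, because C1 \<inter> C2 = {0}. By Zorn's lemma K extends to a pointed cone M
  containing v or -v for every v. Ordering points of the slice by "\<beta> - \<alpha> \<in> M" gives a linear
  order; a positive combination of two roots normalizes to a convex combination of their
  normalizations and therefore lies between them, and roots in C1 precede roots in C2
  because the difference of their normalizations lies in K.\<close>

section \<open>Coordinate sums\<close>

definition coord_sum :: "('a \<Rightarrow> real) \<Rightarrow> real" where
  "coord_sum v = (\<Sum>x\<in>{x. v x \<noteq> 0}. v x)"

lemma coord_sum_eq: "finite A \<Longrightarrow> {x. v x \<noteq> 0} \<subseteq> A \<Longrightarrow> coord_sum v = (\<Sum>x\<in>A. v x)"
  unfolding coord_sum_def by (rule sum.mono_neutral_left) auto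

lemma support_lincomb2_subset:
  "{i. lincomb2 a x b y i \<noteq> 0} \<subseteq> {i. x i \<noteq> 0} \<union> {i. y i \<noteq> 0}"
  by (force simp: lincomb2_def)

lemma coord_sum_lincomb2:
  assumes "finite {i. x i \<noteq> 0}" "finite {i. y i \<noteq> 0}"
  shows "coord_sum (lincomb2 a x b y) = a * coord_sum x + b * coord_sum y"
proof -
  let ?A = "{i. x i \<noteq> 0} \<union> {i. y i \<noteq> 0}"
  have "coord_sum (lincomb2 a x b y) = (\<Sum>i\<in>?A. a * x i + b * y i)"
    using assms by (simp add: coord_sum_eq[OF _ support_lincomb2_subset]) (simp add: lincomb2_def)
  also have "\<dots> = a * coord_sum x + b * coord_sum y"
    using assms by (simp add: sum.distrib sum_distrib_left coord_sum_eq[of ?A])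
  finally show ?thesis .
qed

lemma coord_sum_zero [simp]: "coord_sum (\<lambda>_. 0) = 0"
  by (simp add: coord_sum_def)

lemma coord_sum_nonneg: "(\<And>x. v x \<ge> 0) \<Longrightarrow> coord_sum v \<ge> 0"
  unfolding coord_sum_def by (rule sum_nonneg) auto

lemma coord_sum_eq_0_nonneg:
  assumes "finite {x. v x \<noteq> 0}" "\<And>x. v x \<ge> 0" "coord_sum v = 0"
  shows "v = (\<lambda>_. 0)"
  using assms sum_nonneg_eq_0_iff[of "{x. v x \<noteq> 0}" v] by (auto simp: coord_sum_def)

section \<open>The bilinear form\<close>

lemma vspace_finite_support: "v \<in> vspace S \<Longrightarrow> finite {x. v x \<noteq> 0}"
  by (simp add: vspace_def)

lemma simple_root_in_vspace: "s \<in> S \<Longrightarrow> simple_root s \<in> vspace S"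
  by (auto simp: vspace_def simple_root_def)

lemma lincomb2_in_vspace: "x \<in> vspace S \<Longrightarrow> y \<in> vspace S \<Longrightarrow> lincomb2 a x b y \<in> vspace S"
  unfolding vspace_def using support_lincomb2_subset[of a x b y]
  by (auto intro: finite_subset simp: lincomb2_def)

lemma sreflect_eq_lincomb2:
  "sreflect m s v = lincomb2 1 v (- 2 * bform m (simple_root s) v) (simple_root s)"
  by (auto simp: sreflect_def lincomb2_def)

lemma roots_in_vspace: "v \<in> roots S m \<Longrightarrow> v \<in> vspace S"
  by (induction rule: roots.induct)
    (auto simp: simple_root_in_vspace sreflect_eq_lincomb2 intro!: lincomb2_in_vspace)

lemma bform_eq:
  assumes "finite A" "{x. u x \<noteq> 0} \<subseteq> A" "finite B" "{x. v x \<noteq> 0} \<subseteq> B"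
  shows "bform m u v = (\<Sum>s\<in>A. \<Sum>t\<in>B. u s * v t * bcoef m s t)"
proof -
  have "bform m u v = (\<Sum>s\<in>{x. u x \<noteq> 0}. \<Sum>t\<in>B. u s * v t * bcoef m s t)"
    unfolding bform_def
    by (rule sum.cong[OF refl], rule sum.mono_neutral_left) (use assms in auto)
  also have "\<dots> = (\<Sum>s\<in>A. \<Sum>t\<in>B. u s * v t * bcoef m s t)"
    by (rule sum.mono_neutral_left) (use assms in auto)
  finally show ?thesis .
qed

lemma bform_lincomb2_left:
  assumes "finite {i. x i \<noteq> 0}" "finite {i. y i \<noteq> 0}" "finite {i. z i \<noteq> 0}"
  shows "bform m (lincomb2 a x b y) z = a * bform m x z + b * bform m y z"
proof -
  let ?A = "{i. x i \<noteq> 0} \<union> {i. y i \<noteq> 0}" and ?B = "{i. z i \<noteq> 0}"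
  have "bform m (lincomb2 a x b y) z
      = (\<Sum>s\<in>?A. \<Sum>t\<in>?B. (a * x s + b * y s) * z t * bcoef m s t)"
    using assms by (simp add: bform_eq[OF _ support_lincomb2_subset]) (simp add: lincomb2_def)
  also have "\<dots> = a * bform m x z + b * bform m y z"
    using assms by (simp add: bform_eq[of ?A _ ?B] sum.distrib sum_distrib_left algebra_simps)
  finally show ?thesis .
qed

lemma bform_lincomb2_right:
  assumes "finite {i. x i \<noteq> 0}" "finite {i. y i \<noteq> 0}" "finite {i. z i \<noteq> 0}"
  shows "bform m z (lincomb2 a x b y) = a * bform m z x + b * bform m z y"
proof -
  let ?A = "{i. x i \<noteq> 0} \<union> {i. y i \<noteq> 0}" and ?B = "{i. z i \<noteq> 0}"
  have "bform m z (lincomb2 a x b y)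
      = (\<Sum>s\<in>?B. \<Sum>t\<in>?A. z s * (a * x t + b * y t) * bcoef m s t)"
    using assms by (simp add: bform_eq[OF _ _ _ support_lincomb2_subset]) (simp add: lincomb2_def)
  also have "\<dots> = a * bform m z x + b * bform m z y"
    using assms by (simp add: bform_eq[of ?B _ ?A] sum.distrib sum_distrib_left algebra_simps)
  finally show ?thesis .
qed

lemma bform_sym:
  assumes "coxeter_matrix S m" "x \<in> vspace S" "y \<in> vspace S"
  shows "bform m x y = bform m y x"
proof -
  let ?A = "{i. x i \<noteq> 0}" and ?B = "{i. y i \<noteq> 0}"
  have fin: "finite ?A" "finite ?B" and sub: "?A \<subseteq> S" "?B \<subseteq> S"
    using assms by (auto simp: vspace_def)
  have "bform m x y = (\<Sum>t\<in>?B. \<Sum>s\<in>?A. x s * y t * bcoef m s t)"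
    using fin by (simp add: bform_def sum.swap[of _ ?A])
  also have "\<dots> = (\<Sum>t\<in>?B. \<Sum>s\<in>?A. y t * x s * bcoef m t s)"
  proof (intro sum.cong refl)
    fix t s assume "t \<in> ?B" "s \<in> ?A"
    with sub have "s \<in> S" "t \<in> S" by auto
    with assms(1) have "m s t = m t s" by (simp add: coxeter_matrix_def)
    then show "x s * y t * bcoef m s t = y t * x s * bcoef m t s" by (simp add: bcoef_def)
  qed
  also have "\<dots> = bform m y x"
    by (simp add: bform_def)
  finally show ?thesis .
qed

lemma bform_simple_root_self:
  assumes "coxeter_matrix S m" "s \<in> S"
  shows "bform m (simple_root s) (simple_root s) = 1"
proof -
  have "{x. simple_root s x \<noteq> (0::real)} = {s}" by (auto simp: simple_root_def)
  then have "bform m (simple_root s) (simple_root s) = bcoef m s s"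
    by (simp add: bform_def simple_root_def)
  moreover have "m s s = enat 1" using assms by (simp add: coxeter_matrix_def one_enat_def)
  ultimately show ?thesis by (simp add: bcoef_def)
qed

lemma bform_root_self:
  assumes "coxeter_matrix S m" "v \<in> roots S m"
  shows "bform m v v = 1"
  using assms(2)
proof (induction rule: roots.induct)
  case (simple s)
  then show ?case using bform_simple_root_self[OF assms(1)] by simp
next
  case (refl_step s v)
  let ?a = "simple_root s" and ?c = "bform m (simple_root s) v"
  have V: "?a \<in> vspace S" "v \<in> vspace S"
    using simple_root_in_vspace[OF refl_step(1)] roots_in_vspace[OF refl_step(2)] by blast+
  define w where "w = lincomb2 1 v (-2 * ?c) ?a"
  have fin: "finite {x. ?a x \<noteq> 0}" "finite {x. v x \<noteq> 0}" "finite {x. w x \<noteq> 0}"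
    using V lincomb2_in_vspace[OF V(2,1)] vspace_finite_support unfolding w_def by blast+
  have "bform m w w = bform m v w - 2 * ?c * bform m ?a w"
    using bform_lincomb2_left[OF fin(2,1,3), where a=1 and b="-2 * ?c" and m=m]
    unfolding w_def[symmetric] by simp
  also have "\<dots> = (bform m v v - 2 * ?c * bform m v ?a) - 2 * ?c * (?c - 2 * ?c * bform m ?a ?a)"
    unfolding w_def using fin by (simp add: bform_lincomb2_right)
  also have "\<dots> = 1"
    using refl_step(3) bform_sym[OF assms(1) V(2) V(1)] bform_simple_root_self[OF assms(1) refl_step(1)]
    by (simp add: algebra_simps)
  finally show ?case by (simp add: sreflect_eq_lincomb2 w_def)
qed

lemma root_scaled_root:
  assumes "coxeter_matrix S m" "\<alpha> \<in> roots S m" "(\<lambda>i. c * \<alpha> i) \<in> roots S m"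
  shows "c * c = 1"
proof -
  have fin: "finite {i. \<alpha> i \<noteq> 0}" "finite {i. lincomb2 c \<alpha> 0 \<alpha> i \<noteq> 0}"
    using roots_in_vspace[OF assms(2)] vspace_finite_support lincomb2_in_vspace by blast+
  have scaled: "(\<lambda>i. c * \<alpha> i) = lincomb2 c \<alpha> 0 \<alpha>" by (simp add: lincomb2_def)
  have "1 = bform m (\<lambda>i. c * \<alpha> i) (\<lambda>i. c * \<alpha> i)"
    using bform_root_self[OF assms(1,3)] by simp
  also have "\<dots> = c * c * bform m \<alpha> \<alpha>"
    unfolding scaled using fin by (simp add: bform_lincomb2_left bform_lincomb2_right)
  finally show ?thesis using bform_root_self[OF assms(1,2)] by simp
qed

lemma pos_root_finite_support: "\<alpha> \<in> pos_roots S m \<Longrightarrow> finite {i. \<alpha> i \<noteq> 0}"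
  unfolding pos_roots_def using vspace_finite_support[OF roots_in_vspace] by blast

lemma coord_sum_pos_root:
  assumes "coxeter_matrix S m" "\<alpha> \<in> pos_roots S m"
  shows "coord_sum \<alpha> > 0"
proof -
  have "bform m \<alpha> \<alpha> = 1" using assms bform_root_self by (auto simp: pos_roots_def)
  then have "\<alpha> \<noteq> (\<lambda>_. 0)" by (auto simp: bform_def)
  moreover have "\<And>x. \<alpha> x \<ge> 0" using assms(2) by (simp add: pos_roots_def)
  ultimately have "coord_sum \<alpha> \<noteq> 0"
    using coord_sum_eq_0_nonneg[OF pos_root_finite_support[OF assms(2)]] by blast
  moreover have "coord_sum \<alpha> \<ge> 0" by (rule coord_sum_nonneg) fact
  ultimately show ?thesis by simp
qed

lemma pos_roots_proportional_eq:
  assumes "coxeter_matrix S m" "\<alpha> \<in> pos_roots S m" "\<beta> \<in> pos_roots S m"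
    and "\<And>i. coord_sum \<alpha> * \<beta> i = coord_sum \<beta> * \<alpha> i"
  shows "\<alpha> = \<beta>"
proof -
  define c where "c = coord_sum \<beta> / coord_sum \<alpha>"
  have pos: "coord_sum \<alpha> > 0" "coord_sum \<beta> > 0" using coord_sum_pos_root[OF assms(1)] assms(2,3) by blast+
  then have c: "c > 0" by (simp add: c_def)
  have \<beta>: "\<beta> = (\<lambda>i. c * \<alpha> i)"
  proof
    fix i show "\<beta> i = c * \<alpha> i" using assms(4)[of i] pos by (simp add: c_def field_simps)
  qed
  then have "(\<lambda>i. c * \<alpha> i) \<in> roots S m" using assms(3) by (simp add: pos_roots_def)
  then have "c\<^sup>2 = 1"
    using root_scaled_root[OF assms(1), of \<alpha> c] assms(2) by (simp add: pos_roots_def power2_eq_square)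
  with c have "c = 1" by (simp add: power2_eq_1_iff)
  then show ?thesis using \<beta> by simp
qed

section \<open>Total pointed cones\<close>

definition cone :: "('a \<Rightarrow> real) set \<Rightarrow> bool" where
  "cone P \<longleftrightarrow> (\<lambda>_. 0) \<in> P \<and> (\<forall>x\<in>P. \<forall>y\<in>P. \<forall>a b. a \<ge> 0 \<longrightarrow> b \<ge> 0 \<longrightarrow> lincomb2 a x b y \<in> P)"

definition pointed :: "('a \<Rightarrow> real) set \<Rightarrow> bool" where
  "pointed P \<longleftrightarrow> (\<forall>x. x \<in> P \<longrightarrow> (\<lambda>i. - x i) \<in> P \<longrightarrow> x = (\<lambda>_. 0))"

lemma cone_lincomb2: "cone P \<Longrightarrow> x \<in> P \<Longrightarrow> y \<in> P \<Longrightarrow> a \<ge> 0 \<Longrightarrow> b \<ge> 0 \<Longrightarrow> lincomb2 a x b y \<in> P"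
  by (simp add: cone_def)

lemma cone_scale: "cone P \<Longrightarrow> x \<in> P \<Longrightarrow> a \<ge> 0 \<Longrightarrow> (\<lambda>i. a * x i) \<in> P"
  using cone_lincomb2[of P x x a 0] by (simp add: lincomb2_def)

lemma cone_in_imp_cone: "cone_in S C \<Longrightarrow> cone C"
  by (simp add: cone_in_def cone_def)

lemma pointed_cone_adjoin_ray:
  assumes "cone M" "pointed M" "(\<lambda>i. - v i) \<notin> M"
  shows "\<exists>P. cone P \<and> pointed P \<and> M \<subseteq> P \<and> v \<in> P"
proof (intro exI conjI)
  define P where "P = {lincomb2 1 p t v | p t. p \<in> M \<and> t \<ge> 0}"
  have M0: "(\<lambda>_. 0) \<in> M" using assms(1) by (simp add: cone_def)
  show "M \<subseteq> P"
  proof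
    fix x assume "x \<in> M"
    moreover have "x = lincomb2 1 x 0 v" by (simp add: lincomb2_def)
    ultimately show "x \<in> P" unfolding P_def by fastforce
  qed
  have "v = lincomb2 1 (\<lambda>_. 0) 1 v" by (simp add: lincomb2_def)
  with M0 show "v \<in> P" unfolding P_def by fastforce
  show "cone P"
    unfolding cone_def
  proof (intro conjI ballI allI impI)
    show "(\<lambda>_. 0) \<in> P" using \<open>M \<subseteq> P\<close> M0 by blast
  next
    fix x y a b assume "x \<in> P" "y \<in> P" and ab: "(a::real) \<ge> 0" "(b::real) \<ge> 0"
    then obtain p t p' t' where p: "p \<in> M" "t \<ge> 0" "x = lincomb2 1 p t v"
      and p': "p' \<in> M" "t' \<ge> 0" "y = lincomb2 1 p' t' v"
      unfolding P_def by blast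
    have "lincomb2 a x b y = lincomb2 1 (lincomb2 a p b p') (a * t + b * t') v"
      using p p' by (auto simp: lincomb2_def algebra_simps)
    moreover have "lincomb2 a p b p' \<in> M" using cone_lincomb2[OF assms(1) p(1) p'(1) ab] .
    ultimately show "lincomb2 a x b y \<in> P" using ab p p' unfolding P_def by force
  qed
  show "pointed P"
    unfolding pointed_def
  proof (intro allI impI)
    fix x assume "x \<in> P" "(\<lambda>i. - x i) \<in> P"
    then obtain p t p' t' where p: "p \<in> M" "t \<ge> 0" "x = lincomb2 1 p t v"
      and p': "p' \<in> M" "t' \<ge> 0" "(\<lambda>i. - x i) = lincomb2 1 p' t' v"
      unfolding P_def by blast
    have sum0: "p i + p' i + (t + t') * v i = 0" for i
      using fun_cong[OF p'(3), of i] p(3) by (simp add: lincomb2_def algebra_simps)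
    show "x = (\<lambda>_. 0)"
    proof (cases "t + t' = 0")
      case True
      then have "t = 0" "t' = 0" using p p' by auto
      moreover have "(\<lambda>i. - p i) = p'" using sum0 \<open>t + t' = 0\<close> by (auto simp: add_eq_0_iff)
      ultimately show ?thesis
        using assms(2) p p' unfolding pointed_def by (auto simp: lincomb2_def)
    next
      case False
      then have pos: "t + t' > 0" using p p' by simp
      have "(\<lambda>i. - v i) = lincomb2 (1 / (t + t')) p (1 / (t + t')) p'"
      proof
        fix i
        have "- v i = (p i + p' i) / (t + t')" using sum0[of i] pos by (simp add: field_simps)
        then show "- v i = lincomb2 (1 / (t + t')) p (1 / (t + t')) p' i"
          by (simp add: lincomb2_def add_divide_distrib)
      qed
      moreover have "lincomb2 (1 / (t + t')) p (1 / (t + t')) p' \<in> M"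
        using cone_lincomb2[OF assms(1) p(1) p'(1)] pos by simp
      ultimately show ?thesis using assms(3) by simp
    qed
  qed
qed

lemma cone_Union_chain:
  assumes "C \<noteq> {}" "\<forall>X\<in>C. cone X" "\<forall>X\<in>C. \<forall>Y\<in>C. X \<subseteq> Y \<or> Y \<subseteq> X"
  shows "cone (\<Union>C)"
  unfolding cone_def
proof (intro conjI ballI allI impI)
  show "(\<lambda>_. 0) \<in> \<Union>C" using assms(1,2) by (auto simp: cone_def)
next
  fix x y a b assume "x \<in> \<Union>C" "y \<in> \<Union>C" "(a::real) \<ge> 0" "(b::real) \<ge> 0"
  moreover obtain Z where "Z \<in> C" "x \<in> Z" "y \<in> Z"
    using \<open>x \<in> \<Union>C\<close> \<open>y \<in> \<Union>C\<close> assms(3) by blast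
  ultimately show "lincomb2 a x b y \<in> \<Union>C" using assms(2) cone_lincomb2[of Z] by blast
qed

lemma pointed_Union_chain:
  assumes "\<forall>X\<in>C. pointed X" "\<forall>X\<in>C. \<forall>Y\<in>C. X \<subseteq> Y \<or> Y \<subseteq> X"
  shows "pointed (\<Union>C)"
  unfolding pointed_def
proof (intro allI impI)
  fix x assume "x \<in> \<Union>C" "(\<lambda>i. - x i) \<in> \<Union>C"
  then obtain Z where "Z \<in> C" "x \<in> Z" "(\<lambda>i. - x i) \<in> Z" using assms(2) by blast
  then show "x = (\<lambda>_. 0)" using assms(1) by (auto simp: pointed_def)
qed

lemma total_pointed_cone_extension:
  assumes "cone K" "pointed K"
  shows "\<exists>M. cone M \<and> pointed M \<and> K \<subseteq> M \<and> (\<forall>v. v \<in> M \<or> (\<lambda>i. - v i) \<in> M)"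
proof -
  define F where "F = {P. cone P \<and> pointed P \<and> K \<subseteq> P}"
  have "\<exists>M\<in>F. \<forall>X\<in>F. M \<subseteq> X \<longrightarrow> X = M"
  proof (rule subset_Zorn_nonempty)
    show "F \<noteq> {}" using assms by (auto simp: F_def)
  next
    fix C assume "C \<noteq> {}" "subset.chain F C"
    then show "\<Union>C \<in> F"
      using cone_Union_chain[of C] pointed_Union_chain[of C]
      by (auto simp: F_def subset.chain_def)
  qed
  then obtain M where M: "M \<in> F" and maximal: "\<And>X. X \<in> F \<Longrightarrow> M \<subseteq> X \<Longrightarrow> X = M" by blast
  have "v \<in> M \<or> (\<lambda>i. - v i) \<in> M" for v
    using M maximal pointed_cone_adjoin_ray[of M v] by (auto simp: F_def)
  then show ?thesis using M by (auto simp: F_def)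
qed

section \<open>The order induced by a total pointed cone\<close>

text \<open>For \<alpha>, \<beta> of positive coordinate sum, \<open>balanced_diff \<alpha> \<beta>\<close> is a positive multiple of
  \<beta>/\<Sigma>\<beta> - \<alpha>/\<Sigma>\<alpha>.\<close>

definition balanced_diff :: "('a \<Rightarrow> real) \<Rightarrow> ('a \<Rightarrow> real) \<Rightarrow> ('a \<Rightarrow> real)" where
  "balanced_diff \<alpha> \<beta> = lincomb2 (coord_sum \<alpha>) \<beta> (- coord_sum \<beta>) \<alpha>"

definition cone_order :: "('a \<Rightarrow> real) set \<Rightarrow> ('a \<Rightarrow> real) set \<Rightarrow> (('a \<Rightarrow> real) \<times> ('a \<Rightarrow> real)) set"
  where "cone_order M X = {(\<alpha>, \<beta>). \<alpha> \<in> X \<and> \<beta> \<in> X \<and> balanced_diff \<alpha> \<beta> \<in> M}"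

lemma balanced_diff_self: "balanced_diff \<alpha> \<alpha> = (\<lambda>_. 0)"
  by (auto simp: balanced_diff_def lincomb2_def)

lemma balanced_diff_swap: "balanced_diff \<beta> \<alpha> = (\<lambda>i. - balanced_diff \<alpha> \<beta> i)"
  by (auto simp: balanced_diff_def lincomb2_def)

lemma balanced_diff_trans:
  "coord_sum \<beta> \<noteq> 0 \<Longrightarrow> balanced_diff \<alpha> \<gamma> =
     lincomb2 (coord_sum \<alpha> / coord_sum \<beta>) (balanced_diff \<beta> \<gamma>)
              (coord_sum \<gamma> / coord_sum \<beta>) (balanced_diff \<alpha> \<beta>)"
  by (rule ext) (simp add: balanced_diff_def lincomb2_def field_simps)

lemma balanced_diff_lincomb2:
  assumes "finite {i. \<alpha> i \<noteq> 0}" "finite {i. \<beta> i \<noteq> 0}"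
  shows "balanced_diff \<alpha> (lincomb2 a \<alpha> b \<beta>) = (\<lambda>i. b * balanced_diff \<alpha> \<beta> i)"
    and "balanced_diff (lincomb2 a \<alpha> b \<beta>) \<beta> = (\<lambda>i. a * balanced_diff \<alpha> \<beta> i)"
    and "balanced_diff \<beta> (lincomb2 a \<alpha> b \<beta>) = (\<lambda>i. a * balanced_diff \<beta> \<alpha> i)"
    and "balanced_diff (lincomb2 a \<alpha> b \<beta>) \<alpha> = (\<lambda>i. b * balanced_diff \<beta> \<alpha> i)"
  using coord_sum_lincomb2[OF assms]
  by (auto simp: balanced_diff_def lincomb2_def algebra_simps)

lemma balanced_diff_eq_0:
  "balanced_diff \<alpha> \<beta> = (\<lambda>_. 0) \<Longrightarrow> coord_sum \<alpha> * \<beta> i = coord_sum \<beta> * \<alpha> i"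
  by (drule fun_cong[of _ _ i]) (simp add: balanced_diff_def lincomb2_def)

lemma cone_order_linear:
  assumes "cone M" "pointed M" "\<forall>v. v \<in> M \<or> (\<lambda>i. - v i) \<in> M"
    and pos: "\<And>\<alpha>. \<alpha> \<in> X \<Longrightarrow> coord_sum \<alpha> > 0"
    and proportional_eq: "\<And>\<alpha> \<beta>. \<alpha> \<in> X \<Longrightarrow> \<beta> \<in> X \<Longrightarrow>
      (\<And>i. coord_sum \<alpha> * \<beta> i = coord_sum \<beta> * \<alpha> i) \<Longrightarrow> \<alpha> = \<beta>"
  shows "linear_order_on X (cone_order M X)"
  unfolding linear_order_on_def partial_order_on_def preorder_on_def
proof (intro conjI)
  show "cone_order M X \<subseteq> X \<times> X"
    by (auto simp: cone_order_def)
  show "refl_on X (cone_order M X)"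
    using assms(1) by (simp add: refl_on_def cone_order_def cone_def balanced_diff_self)
  show "trans (cone_order M X)"
  proof (rule transI)
    fix \<alpha> \<beta> \<gamma> assume "(\<alpha>, \<beta>) \<in> cone_order M X" "(\<beta>, \<gamma>) \<in> cone_order M X"
    then have X: "\<alpha> \<in> X" "\<beta> \<in> X" "\<gamma> \<in> X"
      and M: "balanced_diff \<alpha> \<beta> \<in> M" "balanced_diff \<beta> \<gamma> \<in> M"
      by (auto simp: cone_order_def)
    have "balanced_diff \<alpha> \<gamma> \<in> M"
      using balanced_diff_trans[of \<beta> \<alpha> \<gamma>] cone_lincomb2[OF assms(1) M(2) M(1)] pos[OF X(1)]
        pos[OF X(2)] pos[OF X(3)]
      by simp
    with X show "(\<alpha>, \<gamma>) \<in> cone_order M X" by (simp add: cone_order_def)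
  qed
  show "antisym (cone_order M X)"
  proof (rule antisymI)
    fix \<alpha> \<beta> assume "(\<alpha>, \<beta>) \<in> cone_order M X" "(\<beta>, \<alpha>) \<in> cone_order M X"
    then have "\<alpha> \<in> X" "\<beta> \<in> X" "balanced_diff \<alpha> \<beta> = (\<lambda>_. 0)"
      using assms(2) balanced_diff_swap[of \<beta> \<alpha>] by (auto simp: cone_order_def pointed_def)
    then show "\<alpha> = \<beta>" using proportional_eq balanced_diff_eq_0 by metis
  qed
  show "total_on X (cone_order M X)"
    unfolding total_on_def cone_order_def
  proof (intro ballI impI)
    fix \<alpha> \<beta> assume "\<alpha> \<in> X" "\<beta> \<in> X"
    then show "(\<alpha>, \<beta>) \<in> {(\<alpha>, \<beta>). \<alpha> \<in> X \<and> \<beta> \<in> X \<and> balanced_diff \<alpha> \<beta> \<in> M} \<or>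
        (\<beta>, \<alpha>) \<in> {(\<alpha>, \<beta>). \<alpha> \<in> X \<and> \<beta> \<in> X \<and> balanced_diff \<alpha> \<beta> \<in> M}"
      using assms(3) balanced_diff_swap[of \<beta> \<alpha>] by auto
  qed
qed

lemma cone_order_between:
  assumes "cone M" "\<forall>v. v \<in> M \<or> (\<lambda>i. - v i) \<in> M"
    and "\<alpha> \<in> X" "\<beta> \<in> X" "finite {i. \<alpha> i \<noteq> 0}" "finite {i. \<beta> i \<noteq> 0}"
    and "a > 0" "b > 0" "lincomb2 a \<alpha> b \<beta> \<in> X"
  shows "((\<alpha>, lincomb2 a \<alpha> b \<beta>) \<in> cone_order M X \<and> (lincomb2 a \<alpha> b \<beta>, \<beta>) \<in> cone_order M X) \<or>
         ((\<beta>, lincomb2 a \<alpha> b \<beta>) \<in> cone_order M X \<and> (lincomb2 a \<alpha> b \<beta>, \<alpha>) \<in> cone_order M X)"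
proof (cases "balanced_diff \<alpha> \<beta> \<in> M")
  case True
  then show ?thesis
    using assms cone_scale[OF assms(1)] balanced_diff_lincomb2[OF assms(5,6)]
    by (simp add: cone_order_def less_imp_le)
next
  case False
  then have "balanced_diff \<beta> \<alpha> \<in> M" using assms(2) balanced_diff_swap[of \<beta> \<alpha>] by auto
  then show ?thesis
    using assms cone_scale[OF assms(1)] balanced_diff_lincomb2[OF assms(5,6)]
    by (simp add: cone_order_def less_imp_le)
qed

section \<open>Separating two cones\<close>

definition balanced_diffs :: "('a \<Rightarrow> real) set \<Rightarrow> ('a \<Rightarrow> real) set \<Rightarrow> ('a \<Rightarrow> real) set" where
  "balanced_diffs C1 C2 = {lincomb2 1 c2 (-1) c1 | c1 c2. c1 \<in> C1 \<and> c2 \<in> C2 \<and>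
     (\<forall>x. c1 x \<ge> 0) \<and> (\<forall>x. c2 x \<ge> 0) \<and> coord_sum c1 = coord_sum c2}"

lemma cone_in_finite_support: "cone_in S C \<Longrightarrow> x \<in> C \<Longrightarrow> finite {i. x i \<noteq> 0}"
  by (auto simp: cone_in_def vspace_def)

lemma cone_balanced_diffs:
  assumes "cone_in S C1" "cone_in S C2"
  shows "cone (balanced_diffs C1 C2)"
  unfolding cone_def
proof (intro conjI ballI allI impI)
  have "(\<lambda>_. 0) = lincomb2 1 (\<lambda>_. 0) (-1) (\<lambda>_. 0)" by (simp add: lincomb2_def)
  moreover have "(\<lambda>_. 0) \<in> C1" "(\<lambda>_. 0) \<in> C2" using assms by (auto simp: cone_in_def)
  ultimately show "(\<lambda>_. 0) \<in> balanced_diffs C1 C2" unfolding balanced_diffs_def by fastforce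
next
  fix x y a b assume "x \<in> balanced_diffs C1 C2" "y \<in> balanced_diffs C1 C2"
    and ab: "(a::real) \<ge> 0" "(b::real) \<ge> 0"
  then obtain c1 c2 d1 d2
    where c: "x = lincomb2 1 c2 (-1) c1" "c1 \<in> C1" "c2 \<in> C2" "\<forall>x. c1 x \<ge> 0" "\<forall>x. c2 x \<ge> 0"
      "coord_sum c1 = coord_sum c2"
    and d: "y = lincomb2 1 d2 (-1) d1" "d1 \<in> C1" "d2 \<in> C2" "\<forall>x. d1 x \<ge> 0" "\<forall>x. d2 x \<ge> 0"
      "coord_sum d1 = coord_sum d2"
    unfolding balanced_diffs_def by blast
  have "lincomb2 a x b y = lincomb2 1 (lincomb2 a c2 b d2) (-1) (lincomb2 a c1 b d1)"
    using c d by (auto simp: lincomb2_def algebra_simps)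
  moreover have "lincomb2 a c1 b d1 \<in> C1" "lincomb2 a c2 b d2 \<in> C2"
    using cone_lincomb2[OF cone_in_imp_cone[OF assms(1)] c(2) d(2) ab]
      cone_lincomb2[OF cone_in_imp_cone[OF assms(2)] c(3) d(3) ab] by blast+
  moreover have "\<forall>x. lincomb2 a c1 b d1 x \<ge> 0" "\<forall>x. lincomb2 a c2 b d2 x \<ge> 0"
    using c d ab by (auto simp: lincomb2_def)
  moreover have "coord_sum (lincomb2 a c1 b d1) = coord_sum (lincomb2 a c2 b d2)"
    using c d assms by (simp add: coord_sum_lincomb2 cone_in_finite_support)
  ultimately show "lincomb2 a x b y \<in> balanced_diffs C1 C2" unfolding balanced_diffs_def by blast
qed

lemma pointed_balanced_diffs:
  assumes "cone_in S C1" "cone_in S C2" "C1 \<inter> C2 = {\<lambda>_. 0}"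
  shows "pointed (balanced_diffs C1 C2)"
  unfolding pointed_def
proof (intro allI impI)
  fix x assume "x \<in> balanced_diffs C1 C2" "(\<lambda>i. - x i) \<in> balanced_diffs C1 C2"
  then obtain c1 c2 d1 d2
    where c: "x = lincomb2 1 c2 (-1) c1" "c1 \<in> C1" "c2 \<in> C2" "\<forall>x. c1 x \<ge> 0" "\<forall>x. c2 x \<ge> 0"
      "coord_sum c1 = coord_sum c2"
    and d: "(\<lambda>i. - x i) = lincomb2 1 d2 (-1) d1" "d1 \<in> C1" "d2 \<in> C2" "\<forall>x. d2 x \<ge> 0"
    unfolding balanced_diffs_def by blast
  have "lincomb2 1 c2 1 d2 = lincomb2 1 c1 1 d1"
    using c(1) d(1) by (auto simp: lincomb2_def fun_eq_iff algebra_simps)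
  moreover have "lincomb2 1 c2 1 d2 \<in> C2" "lincomb2 1 c1 1 d1 \<in> C1"
    using cone_lincomb2[OF cone_in_imp_cone[OF assms(2)] c(3) d(3)]
      cone_lincomb2[OF cone_in_imp_cone[OF assms(1)] c(2) d(2)] by simp_all
  ultimately have "lincomb2 1 c2 1 d2 = (\<lambda>_. 0)" using assms(3) by auto
  then have "c2 = (\<lambda>_. 0)"
    using c(5) d(4) by (auto simp: lincomb2_def fun_eq_iff add_nonneg_eq_0_iff)
  then have "c1 = (\<lambda>_. 0)"
    using coord_sum_eq_0_nonneg[OF cone_in_finite_support[OF assms(1) c(2)]] c(4,6) by simp
  with \<open>c2 = (\<lambda>_. 0)\<close> show "x = (\<lambda>_. 0)" using c(1) by (simp add: lincomb2_def)
qed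

lemma balanced_diff_in_balanced_diffs:
  assumes "cone_in S C1" "cone_in S C2" "\<alpha> \<in> C1" "\<beta> \<in> C2"
    and "\<And>x. \<alpha> x \<ge> 0" "\<And>x. \<beta> x \<ge> 0"
  shows "balanced_diff \<alpha> \<beta> \<in> balanced_diffs C1 C2"
proof -
  have sums: "coord_sum \<alpha> \<ge> 0" "coord_sum \<beta> \<ge> 0" using assms(5,6) coord_sum_nonneg by blast+
  define c1 where "c1 = lincomb2 (coord_sum \<beta>) \<alpha> 0 \<alpha>"
  define c2 where "c2 = lincomb2 (coord_sum \<alpha>) \<beta> 0 \<beta>"
  have "c1 \<in> C1" "c2 \<in> C2"
    unfolding c1_def c2_def using assms sums
    by (simp_all add: cone_lincomb2[OF cone_in_imp_cone[OF assms(1)]]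
        cone_lincomb2[OF cone_in_imp_cone[OF assms(2)]])
  moreover have "\<forall>x. c1 x \<ge> 0" "\<forall>x. c2 x \<ge> 0"
    using assms sums by (simp_all add: c1_def c2_def lincomb2_def)
  moreover have "coord_sum c1 = coord_sum c2"
    using assms by (simp add: c1_def c2_def coord_sum_lincomb2 cone_in_finite_support)
  moreover have "balanced_diff \<alpha> \<beta> = lincomb2 1 c2 (-1) c1"
    by (auto simp: balanced_diff_def lincomb2_def c1_def c2_def)
  ultimately show ?thesis unfolding balanced_diffs_def by blast
qed

theorem corollary3p2:
  fixes S :: "'a set" and m :: "'a \<Rightarrow> 'a \<Rightarrow> enat"
    and C1 C2 :: "('a \<Rightarrow> real) set"
  assumes "coxeter_matrix S m"
    and "cone_in S C1" and "cone_in S C2"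
    and "C1 \<inter> C2 = {\<lambda>_. 0}"
  shows "\<exists>r. reflection_ordering S m r \<and>
           (\<forall>\<alpha>\<in>pos_roots S m \<inter> C1. \<forall>\<beta>\<in>pos_roots S m \<inter> C2. (\<alpha>, \<beta>) \<in> r \<and> \<alpha> \<noteq> \<beta>)"
proof -
  let ?P = "pos_roots S m"
  obtain M where M: "cone M" "pointed M" "balanced_diffs C1 C2 \<subseteq> M"
    and total: "\<forall>v. v \<in> M \<or> (\<lambda>i. - v i) \<in> M"
    using total_pointed_cone_extension[OF cone_balanced_diffs[OF assms(2,3)]
        pointed_balanced_diffs[OF assms(2-4)]] by blast
  have pos: "\<And>\<alpha>. \<alpha> \<in> ?P \<Longrightarrow> coord_sum \<alpha> > 0"
    using coord_sum_pos_root[OF assms(1)] .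
  have "reflection_ordering S m (cone_order M ?P)"
    unfolding reflection_ordering_def
  proof (intro conjI ballI allI impI)
    show "linear_order_on ?P (cone_order M ?P)"
      using cone_order_linear[OF M(1,2) total pos pos_roots_proportional_eq[OF assms(1)]] .
    show "cone_order M ?P \<subseteq> ?P \<times> ?P"
      by (auto simp: cone_order_def)
  next
    fix \<alpha> \<beta> a b assume "\<alpha> \<in> ?P" "\<beta> \<in> ?P" "(a::real) > 0" "(b::real) > 0"
      "lincomb2 a \<alpha> b \<beta> \<in> ?P"
    then show "((\<alpha>, lincomb2 a \<alpha> b \<beta>) \<in> cone_order M ?P \<and> (lincomb2 a \<alpha> b \<beta>, \<beta>) \<in> cone_order M ?P) \<or>
        ((\<beta>, lincomb2 a \<alpha> b \<beta>) \<in> cone_order M ?P \<and> (lincomb2 a \<alpha> b \<beta>, \<alpha>) \<in> cone_order M ?P)"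
      using cone_order_between[OF M(1) total] pos_root_finite_support by blast
  qed
  moreover have "(\<alpha>, \<beta>) \<in> cone_order M ?P \<and> \<alpha> \<noteq> \<beta>" if "\<alpha> \<in> ?P \<inter> C1" "\<beta> \<in> ?P \<inter> C2" for \<alpha> \<beta>
  proof
    show "(\<alpha>, \<beta>) \<in> cone_order M ?P"
      using that M(3) balanced_diff_in_balanced_diffs[OF assms(2,3), of \<alpha> \<beta>]
      by (auto simp: cone_order_def pos_roots_def)
    show "\<alpha> \<noteq> \<beta>"
    proof
      assume "\<alpha> = \<beta>"
      with that assms(4) have "\<alpha> = (\<lambda>_. 0)" by auto
      with that pos[of \<alpha>] show False by simp
    qed
  qed
  ultimately show ?thesis by blast
qed

end
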